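(* Let $E,A\in\mathbb{R}^{n\times n}$ with $A$ nonsingular and $\mathrm{rank}\,E=r\ge1$, and let $(X,Y)$ be a full rank decomposition of $E$ with $X,Y\in\mathbb{R}^{n\times r}$. (i) If $(E,A)$ has index one, then $Y^T\mathcal{C}(E,A)=\mathbb{R}^r$. (ii) If $(E,A)$ has index two, then $Y^T\mathcal{C}(E,A)=\mathrm{Im}\big((Y^TA^{-1}X)^2\big)$ and this subspace has dimension strictly less than $r$.
   Context: For $E,A\in\mathbb{R}^{n\times n}$ with $A$ nonsingular, $(E,A)$ denotes the descriptor system $E\dot x=Ax$. Its index is the smallest integer $k^*\ge0$ with $\mathrm{Im}((A^{-1}E)^{k^*+1})=\mathrm{Im}((A^{-1}E)^{k^*})$, and its consistency space is $\mathcal{C}(E,A)=\mathrm{Im}((A^{-1}E)^{k^*})$. A full rank decomposition of $E$ is a pair $(X,Y)$ of matrices with full column rank such that $E=XY^T$. *)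

theory Defs
  imports "HOL-Analysis.Analysis"
begin

definition mat_image :: "real^'n^'m \<Rightarrow> (real^'m) set" where
  "mat_image M = range (\<lambda>x. M *v x)"

fun mat_pow :: "real^'n^'n \<Rightarrow> nat \<Rightarrow> real^'n^'n" where
  "mat_pow M 0 = mat 1"
| "mat_pow M (Suc k) = M ** mat_pow M k"

definition dae_index :: "real^'n^'n \<Rightarrow> real^'n^'n \<Rightarrow> nat" where
  "dae_index E A = (LEAST k. mat_image (mat_pow (matrix_inv A ** E) (Suc k))
                            = mat_image (mat_pow (matrix_inv A ** E) k))"

definition consistency_space :: "real^'n^'n \<Rightarrow> real^'n^'n \<Rightarrow> (real^'n) set" where
  "consistency_space E A = mat_image (mat_pow (matrix_inv A ** E) (dae_index E A))"

definition full_rank_decomposition :: "real^'n^'n \<Rightarrow> real^'r^'n \<Rightarrow> real^'r^'n \<Rightarrow> bool" where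
  "full_rank_decomposition E X Y \<longleftrightarrow>
     rank X = CARD('r) \<and> rank Y = CARD('r) \<and> E = X ** transpose Y"

end

theory Submission
  imports Defs
begin

text \<open>
  Write \<open>N = A\<inverse>E = P Y\<^sup>T\<close> with \<open>P = A\<inverse>X\<close> injective and \<open>Y\<^sup>T\<close> surjective, and let
  \<open>M = Y\<^sup>T P = Y\<^sup>T A\<inverse>X\<close>. Then \<open>Y\<^sup>T N\<^sup>k = M\<^sup>k Y\<^sup>T\<close> and \<open>N\<^sup>k\<^sup>+\<^sup>1 = P M\<^sup>k Y\<^sup>T\<close>, so \<open>Y\<^sup>T\<close> maps
  \<open>Im N\<^sup>k\<close> onto \<open>Im M\<^sup>k\<close>, and \<open>Im N\<^sup>k\<^sup>+\<^sup>1\<close> is the injective image of \<open>Im M\<^sup>k\<close> under \<open>P\<close>.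
  Hence \<open>Im N\<^sup>2 = Im N\<close> iff \<open>Im M = \<real>\<^sup>r\<close>: for index one \<open>Y\<^sup>T C = Im M = \<real>\<^sup>r\<close>, while for
  index two \<open>Y\<^sup>T C = Im M\<^sup>2\<close> lies in the proper subspace \<open>Im M\<close>.
\<close>

lemma mat_image_mul: "mat_image (B ** C) = (\<lambda>x. B *v x) ` mat_image C"
  unfolding mat_image_def by (auto simp: matrix_vector_mul_assoc[symmetric])

lemma mat_image_mul_surj:
  assumes "surj ((*v) C)"
  shows "mat_image (B ** C) = mat_image B"
  using assms unfolding mat_image_mul by (simp add: mat_image_def)

lemma subspace_mat_image: "subspace (mat_image B)"
  unfolding mat_image_def
  using linear_subspace_image[OF matrix_vector_mul_linear subspace_UNIV] by simp

lemma dim_mat_image_less: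
  fixes M :: "real^'r^'r"
  assumes "mat_image M \<noteq> UNIV"
  shows "dim (mat_image M) < CARD('r)"
proof -
  have "span (mat_image M) = mat_image M"
    by (simp add: subspace_mat_image)
  then have "dim (mat_image M) \<noteq> DIM(real^'r)"
    using assms dim_eq_full by metis
  then show ?thesis
    using dim_subset_UNIV_cart[of "mat_image M"] by simp
qed

lemma mat_image_mat_pow_Suc_subset: "mat_image (mat_pow B (Suc k)) \<subseteq> mat_image (mat_pow B k)"
proof (induction k)
  case 0
  then show ?case by (auto simp: mat_image_def)
next
  case (Suc k)
  then show ?case
    by (metis image_mono mat_image_mul mat_pow.simps(2))
qed

lemma dim_mat_image_mat_pow_less:
  fixes M :: "real^'r^'r"
  assumes "mat_image M \<noteq> UNIV"
  shows "dim (mat_image (mat_pow M (Suc k))) < CARD('r)"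
proof -
  have "mat_image (mat_pow M (Suc k)) \<subseteq> mat_image M"
    by (auto simp: mat_image_def matrix_vector_mul_assoc[symmetric])
  then show ?thesis
    using dim_subset dim_mat_image_less[OF assms] le_less_trans by blast
qed

lemma mat_image_mat_pow_stabilizes:
  fixes B :: "real^'n^'n"
  shows "\<exists>k. mat_image (mat_pow B (Suc k)) = mat_image (mat_pow B k)"
proof (rule ccontr)
  assume strict: "\<nexists>k. mat_image (mat_pow B (Suc k)) = mat_image (mat_pow B k)"
  have "dim (mat_image (mat_pow B k)) + k \<le> CARD('n)" for k
  proof (induction k)
    case 0
    then show ?case by (simp add: dim_subset_UNIV_cart)
  next
    case (Suc k)
    have "dim (mat_image (mat_pow B (Suc k))) < dim (mat_image (mat_pow B k))"
      using strict mat_image_mat_pow_Suc_subset[of B k] dim_subset subspace_mat_image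
      by (metis le_neq_implies_less subspace_dim_equal)
    then show ?case using Suc by simp
  qed
  from this[of "Suc CARD('n)"] show False by simp
qed

lemma dae_index_stable:
  "mat_image (mat_pow (matrix_inv A ** E) (Suc (dae_index E A)))
     = mat_image (mat_pow (matrix_inv A ** E) (dae_index E A))"
  unfolding dae_index_def by (rule LeastI_ex[OF mat_image_mat_pow_stabilizes])

lemma dae_index_minimal:
  assumes "k < dae_index E A"
  shows "mat_image (mat_pow (matrix_inv A ** E) (Suc k)) \<noteq> mat_image (mat_pow (matrix_inv A ** E) k)"
  using assms unfolding dae_index_def by (rule not_less_Least)

lemma matrix_inv_right:
  fixes A :: "'a::field^'n^'n"
  assumes "invertible A"
  shows "A ** matrix_inv A = mat 1"
proof -
  have "A ** matrix_inv A = mat 1 \<and> matrix_inv A ** A = mat 1"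
    unfolding matrix_inv_def using assms unfolding invertible_def by (rule someI_ex)
  then show ?thesis ..
qed

lemma inj_matrix_inv_mul:
  fixes A :: "real^'n^'n" and X :: "real^'r^'n"
  assumes "invertible A" and "inj ((*v) X)"
  shows "inj ((*v) (matrix_inv A ** X))"
proof -
  obtain C where C: "C ** X = mat 1"
    using assms(2) matrix_left_invertible_injective by blast
  have "(C ** A) ** (matrix_inv A ** X) = C ** ((A ** matrix_inv A) ** X)"
    by (simp add: matrix_mul_assoc)
  also have "\<dots> = mat 1"
    by (simp add: matrix_inv_right[OF assms(1)] C)
  finally show ?thesis
    using matrix_left_invertible_injective by blast
qed

lemma mat_pow_mul_commute:
  fixes P :: "real^'r^'n" and Q :: "real^'n^'r"
  shows "Q ** mat_pow (P ** Q) k = mat_pow (Q ** P) k ** Q"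
proof (induction k)
  case 0
  then show ?case by simp
next
  case (Suc k)
  have "Q ** mat_pow (P ** Q) (Suc k) = (Q ** P) ** (Q ** mat_pow (P ** Q) k)"
    by (simp add: matrix_mul_assoc)
  then show ?case
    using Suc by (simp add: matrix_mul_assoc)
qed

lemma mat_pow_Suc_mul:
  fixes P :: "real^'r^'n" and Q :: "real^'n^'r"
  shows "mat_pow (P ** Q) (Suc k) = P ** (mat_pow (Q ** P) k ** Q)"
proof -
  have "mat_pow (P ** Q) (Suc k) = P ** (Q ** mat_pow (P ** Q) k)"
    by (simp add: matrix_mul_assoc)
  then show ?thesis
    by (simp only: mat_pow_mul_commute)
qed

lemma image_mat_image_mat_pow_mul:
  fixes P :: "real^'r^'n" and Q :: "real^'n^'r"
  assumes "surj ((*v) Q)"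
  shows "(\<lambda>v. Q *v v) ` mat_image (mat_pow (P ** Q) k) = mat_image (mat_pow (Q ** P) k)"
  using assms by (simp add: mat_image_mul[symmetric] mat_pow_mul_commute mat_image_mul_surj)

lemma mat_image_mat_pow_Suc_mul:
  fixes P :: "real^'r^'n" and Q :: "real^'n^'r"
  assumes "surj ((*v) Q)"
  shows "mat_image (mat_pow (P ** Q) (Suc k)) = (\<lambda>v. P *v v) ` mat_image (mat_pow (Q ** P) k)"
  using assms by (simp only: mat_pow_Suc_mul mat_image_mul[of P] mat_image_mul_surj)

lemma mat_image_mat_pow_mul_stable_iff:
  fixes P :: "real^'r^'n" and Q :: "real^'n^'r"
  assumes "inj ((*v) P)" and "surj ((*v) Q)"
  shows "mat_image (mat_pow (P ** Q) (Suc (Suc k))) = mat_image (mat_pow (P ** Q) (Suc k))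
     \<longleftrightarrow> mat_image (mat_pow (Q ** P) (Suc k)) = mat_image (mat_pow (Q ** P) k)"
  unfolding mat_image_mat_pow_Suc_mul[OF assms(2), of P "Suc k"] mat_image_mat_pow_Suc_mul[OF assms(2), of P k]
  using assms(1) by (rule inj_image_eq_iff)

lemma full_rank_decomposition_factor:
  fixes A E :: "real^'n^'n" and X Y :: "real^'r^'n"
  assumes "invertible A" and "full_rank_decomposition E X Y"
  shows "matrix_inv A ** E = (matrix_inv A ** X) ** transpose Y"
    and "inj ((*v) (matrix_inv A ** X))"
    and "surj ((*v) (transpose Y))"
proof -
  have E: "E = X ** transpose Y" and rank_X: "rank X = CARD('r)" and rank_Y: "rank Y = CARD('r)"
    using assms(2) unfolding full_rank_decomposition_def by auto
  show "matrix_inv A ** E = (matrix_inv A ** X) ** transpose Y"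
    unfolding E by (simp add: matrix_mul_assoc)
  show "inj ((*v) (matrix_inv A ** X))"
    using assms(1) rank_X full_rank_injective inj_matrix_inv_mul by blast
  show "surj ((*v) (transpose Y))"
    using rank_Y full_rank_surjective rank_transpose by metis
qed

theorem mainTheorem10:
  fixes E A :: "real^'n^'n" and X Y :: "real^'r^'n"
  assumes "invertible A"
    and "rank E = CARD('r)"
    and "full_rank_decomposition E X Y"
  shows "(dae_index E A = 1 \<longrightarrow>
            (\<lambda>v. transpose Y *v v) ` consistency_space E A = (UNIV :: (real^'r) set))
       \<and> (dae_index E A = 2 \<longrightarrow>
            (\<lambda>v. transpose Y *v v) ` consistency_space E A
               = mat_image (mat_pow (transpose Y ** matrix_inv A ** X) 2)
          \<and> dim ((\<lambda>v. transpose Y *v v) ` consistency_space E A) < CARD('r))"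
proof -
  define P where "P = matrix_inv A ** X"
  define M where "M = transpose Y ** P"
  note N = full_rank_decomposition_factor[OF assms(1,3), folded P_def]
  have image_C: "(\<lambda>v. transpose Y *v v) ` consistency_space E A = mat_image (mat_pow M (dae_index E A))"
    unfolding consistency_space_def N(1) M_def using N(3) by (rule image_mat_image_mat_pow_mul)
  have "mat_pow M 1 = M" and "mat_image (mat_pow M 0) = UNIV"
    by (simp_all add: mat_image_def)
  then have stable_iff: "mat_image (mat_pow (matrix_inv A ** E) (Suc 1)) = mat_image (mat_pow (matrix_inv A ** E) 1)
      \<longleftrightarrow> mat_image M = UNIV"
    using mat_image_mat_pow_mul_stable_iff[OF N(2,3), of 0] by (simp only: N(1) M_def One_nat_def)
  show ?thesis
  proof (intro conjI impI)
    assume "dae_index E A = 1"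
    then show "(\<lambda>v. transpose Y *v v) ` consistency_space E A = UNIV"
      using dae_index_stable[of A E] stable_iff image_C by (metis \<open>mat_pow M 1 = M\<close>)
  next
    assume "dae_index E A = 2"
    then show "(\<lambda>v. transpose Y *v v) ` consistency_space E A
        = mat_image (mat_pow (transpose Y ** matrix_inv A ** X) 2)"
      using image_C by (simp add: M_def P_def matrix_mul_assoc)
  next
    assume index_2: "dae_index E A = 2"
    then have "mat_image M \<noteq> UNIV"
      using dae_index_minimal[of 1 E A] stable_iff by simp
    then show "dim ((\<lambda>v. transpose Y *v v) ` consistency_space E A) < CARD('r)"
      using dim_mat_image_mat_pow_less[of M 1] image_C index_2 by (simp add: numeral_2_eq_2)
  qed
qed

end
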